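(* There are two computable trees $P,Q\subseteq2^{<\omega}$ such that $[P]$ and $[Q]$ have the same order type (under the lexicographic order) but there is no computable order isomorphism $h^*:[P]\to[Q]$.
   Context: A tree is a subset of $2^{<\omega}$ closed under initial segments; it is computable if it is a computable set under a standard coding of strings by natural numbers. $[T]$ is the set of infinite binary sequences all of whose finite initial segments lie in $T$, ordered by $X<Y$ iff $X\ne Y$ and $X(n)<Y(n)$ at the first $n$ where they differ. A map $h^*:[P]\to[Q]$ is computable if there is an oracle Turing machine which, given oracle $X\in[P]$, computes $h^*(X)$. *)

theory Defs
  imports Main
begin

datatype recf =
    Zero
  | Succ
  | Proj nat
  | Comp recf "recf list"
  | Prec recf recf
  | Mn recf
  | Orc

inductive reval :: "(nat \<Rightarrow> bool) \<Rightarrow> recf \<Rightarrow> nat list \<Rightarrow> nat \<Rightarrow> bool" where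
  zero: "reval A Zero xs 0"
| succ: "reval A Succ (x # xs) (Suc x)"
| proj: "i < length xs \<Longrightarrow> reval A (Proj i) xs (xs ! i)"
| comp: "list_all2 (\<lambda>g y. reval A g xs y) gs ys \<Longrightarrow> reval A f ys z \<Longrightarrow> reval A (Comp f gs) xs z"
| prec0: "reval A f xs y \<Longrightarrow> reval A (Prec f g) (0 # xs) y"
| precS: "reval A (Prec f g) (n # xs) r \<Longrightarrow> reval A g (n # r # xs) y
          \<Longrightarrow> reval A (Prec f g) (Suc n # xs) y"
| mn: "reval A f (n # xs) 0 \<Longrightarrow> (\<forall>m<n. \<exists>v. v \<noteq> 0 \<and> reval A f (m # xs) v)
          \<Longrightarrow> reval A (Mn f) xs n"
| orc: "reval A Orc (x # xs) (if A x then 1 else 0)"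

text \<open>A set of naturals is computable if its characteristic function is (total) recursive
  (the oracle is the constant-false one, i.e. not used).\<close>
definition computable_set :: "nat set \<Rightarrow> bool" where
  "computable_set S \<longleftrightarrow> (\<exists>e. \<forall>n. reval (\<lambda>_. False) e [n] (if n \<in> S then 1 else 0))"

text \<open>Binary strings are bool lists (False = 0, True = 1). Standard (bijective) coding by naturals.\<close>
fun str_code :: "bool list \<Rightarrow> nat" where
  "str_code [] = 0"
| "str_code (b # s) = 2 * str_code s + (if b then 2 else 1)"

definition is_tree :: "bool list set \<Rightarrow> bool" where
  "is_tree T \<longleftrightarrow> (\<forall>s t. s @ t \<in> T \<longrightarrow> s \<in> T)"

definition computable_tree :: "bool list set \<Rightarrow> bool" where
  "computable_tree T \<longleftrightarrow> computable_set (str_code ` T)"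

definition paths :: "bool list set \<Rightarrow> (nat \<Rightarrow> bool) set" where
  "paths T = {X. \<forall>n. map X [0..<n] \<in> T}"

definition lex_less :: "(nat \<Rightarrow> bool) \<Rightarrow> (nat \<Rightarrow> bool) \<Rightarrow> bool" where
  "lex_less X Y \<longleftrightarrow> X \<noteq> Y \<and> (let n = (LEAST n. X n \<noteq> Y n) in \<not> X n \<and> Y n)"

definition order_iso_on :: "(nat \<Rightarrow> bool) set \<Rightarrow> (nat \<Rightarrow> bool) set
    \<Rightarrow> ((nat \<Rightarrow> bool) \<Rightarrow> (nat \<Rightarrow> bool)) \<Rightarrow> bool" where
  "order_iso_on A B h \<longleftrightarrow> bij_betw h A B \<and>
     (\<forall>X\<in>A. \<forall>Y\<in>A. lex_less X Y \<longleftrightarrow> lex_less (h X) (h Y))"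

definition computable_map_on :: "(nat \<Rightarrow> bool) set \<Rightarrow> ((nat \<Rightarrow> bool) \<Rightarrow> (nat \<Rightarrow> bool)) \<Rightarrow> bool" where
  "computable_map_on A h \<longleftrightarrow>
     (\<exists>e. \<forall>X\<in>A. \<forall>n. reval X e [n] (if h X n then 1 else 0))"

end

(*
  Both trees have, besides the zero path, the paths with a single 1 at some k and the paths with
  exactly two 1s at k and k + 1 + p_k. For P every p_k is 0; for Q, p_k is 0 if k is not in
  the diagonal halting set and s + 1 if k enters it at stage s. Q is computable because whether a
  string of length k + p + 2 + t with 1s at k and k + p + 1 lies in Q depends only on the first t
  steps of the diagonal computation. In the lexicographic order the k-th pair path has exactly 2k paths above it, so both
  path sets have the same order type and every isomorphism maps the k-th pair path of P to that
  of Q. A computable isomorphism would thus, on the computable oracle with 1s at k and k + 1,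
  compute bit k + 1 of the image, which is 1 iff k is not in the diagonal set.
*)

theory Submission
  imports Defs "HOL-Library.Nat_Bijection"
begin

section \<open>Total computable functions and predicates\<close>

named_theorems computable_intros

definition computable_fun :: "nat \<Rightarrow> (nat list \<Rightarrow> nat) \<Rightarrow> bool" where
  "computable_fun n f \<longleftrightarrow> (\<exists>e. \<forall>xs. length xs = n \<longrightarrow> reval (\<lambda>_. False) e xs (f xs))"

definition computable_pred :: "nat \<Rightarrow> (nat list \<Rightarrow> bool) \<Rightarrow> bool" where
  "computable_pred n P \<longleftrightarrow> computable_fun n (\<lambda>xs. if P xs then 1 else 0)"

lemma computable_fun_cong:
  "computable_fun n f \<Longrightarrow> (\<And>xs. length xs = n \<Longrightarrow> f xs = g xs) \<Longrightarrow> computable_fun n g"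
  unfolding computable_fun_def by metis

lemma computable_pred_cong:
  "computable_pred n P \<Longrightarrow> (\<And>xs. length xs = n \<Longrightarrow> P xs = Q xs) \<Longrightarrow> computable_pred n Q"
  unfolding computable_pred_def by (erule computable_fun_cong) simp

lemma computable_set_iff_pred: "computable_set S \<longleftrightarrow> computable_pred 1 (\<lambda>xs. xs ! 0 \<in> S)"
proof -
  have "(\<forall>xs. length xs = 1 \<longrightarrow> P xs) \<longleftrightarrow> (\<forall>x. P [x])" for P :: "nat list \<Rightarrow> bool"
    by (metis One_nat_def length_0_conv length_Suc_conv list.size(4))
  then show ?thesis
    unfolding computable_pred_def computable_fun_def computable_set_def by simp
qed

fun const_prog :: "nat \<Rightarrow> recf" where
  "const_prog 0 = Zero"
| "const_prog (Suc c) = Comp Succ [const_prog c]"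

lemma reval_const_prog: "reval A (const_prog c) xs c"
proof (induction c)
  case 0
  show ?case by (simp add: reval.zero)
next
  case (Suc c)
  then have "list_all2 (\<lambda>g y. reval A g xs y) [const_prog c] [c]" by simp
  moreover have "reval A Succ [c] (Suc c)" by (rule reval.succ)
  ultimately show ?case unfolding const_prog.simps by (rule reval.comp)
qed

lemma computable_fun_const [computable_intros]: "computable_fun n (\<lambda>xs. c)"
  unfolding computable_fun_def using reval_const_prog by blast

lemma computable_fun_nth [computable_intros]: "i < n \<Longrightarrow> computable_fun n (\<lambda>xs. xs ! i)"
  unfolding computable_fun_def by (metis reval.proj)

lemma computable_fun_comp:
  assumes "computable_fun m f" "length gs = m" "\<forall>g\<in>set gs. computable_fun n g"
  shows "computable_fun n (\<lambda>xs. f (map (\<lambda>g. g xs) gs))"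
proof -
  let ?computes = "\<lambda>e g. \<forall>xs. length xs = n \<longrightarrow> reval (\<lambda>_. False) e xs (g xs)"
  obtain ef where ef: "\<forall>ys. length ys = m \<longrightarrow> reval (\<lambda>_. False) ef ys (f ys)"
    using assms(1) unfolding computable_fun_def by blast
  have "\<exists>es. list_all2 ?computes es gs"
    using assms(3)
  proof (induction gs)
    case (Cons g gs)
    obtain es where "list_all2 ?computes es gs" using Cons by auto
    moreover obtain e where "?computes e g" using Cons.prems unfolding computable_fun_def by auto
    ultimately
    show ?case by (intro exI[of _ "e # es"]) auto
  qed simp
  then obtain es where es: "list_all2 ?computes es gs" by blast
  have "reval (\<lambda>_. False) (Comp ef es) xs (f (map (\<lambda>g. g xs) gs))" if "length xs = n" for xs
  proof (rule reval.comp)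
    show "list_all2 (\<lambda>e y. reval (\<lambda>_. False) e xs y) es (map (\<lambda>g. g xs) gs)"
      using es that by (auto simp: list_all2_conv_all_nth)
    show "reval (\<lambda>_. False) ef (map (\<lambda>g. g xs) gs) (f (map (\<lambda>g. g xs) gs))"
      using ef assms(2) by simp
  qed
  then show ?thesis unfolding computable_fun_def by blast
qed

lemma computable_fun_comp1:
  "computable_fun 1 h \<Longrightarrow> computable_fun n f \<Longrightarrow> computable_fun n (\<lambda>xs. h [f xs])"
  using computable_fun_comp[of 1 h "[f]" n] by simp

lemma computable_fun_comp2:
  "computable_fun 2 h \<Longrightarrow> computable_fun n f \<Longrightarrow> computable_fun n g
    \<Longrightarrow> computable_fun n (\<lambda>xs. h [f xs, g xs])"
  using computable_fun_comp[of 2 h "[f, g]" n] by simp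

lemma computable_fun_comp3:
  "computable_fun 3 h \<Longrightarrow> computable_fun n f \<Longrightarrow> computable_fun n g \<Longrightarrow> computable_fun n k
    \<Longrightarrow> computable_fun n (\<lambda>xs. h [f xs, g xs, k xs])"
  using computable_fun_comp[of 3 h "[f, g, k]" n] by (simp add: numeral_3_eq_3)

lemma computable_fun_lift1:
  "computable_fun 1 h \<Longrightarrow> (\<And>xs. length xs = 1 \<Longrightarrow> h xs = op (xs ! 0))
    \<Longrightarrow> computable_fun n f \<Longrightarrow> computable_fun n (\<lambda>xs. op (f xs))"
  by (drule (1) computable_fun_comp1) (erule computable_fun_cong, simp)

lemma computable_fun_lift2:
  "computable_fun 2 h \<Longrightarrow> (\<And>xs. length xs = 2 \<Longrightarrow> h xs = op (xs ! 0) (xs ! 1))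
    \<Longrightarrow> computable_fun n f \<Longrightarrow> computable_fun n g \<Longrightarrow> computable_fun n (\<lambda>xs. op (f xs) (g xs))"
  by (drule (2) computable_fun_comp2) (erule computable_fun_cong, simp)

lemma computable_fun_Suc [computable_intros]: "computable_fun n f \<Longrightarrow> computable_fun n (\<lambda>xs. Suc (f xs))"
proof (rule computable_fun_lift1[where op=Suc])
  show "computable_fun 1 (\<lambda>xs. Suc (xs ! 0))"
    unfolding computable_fun_def
  proof (intro exI allI impI)
    fix xs :: "nat list"
    assume "length xs = 1"
    then obtain x where "xs = [x]" by (cases xs) auto
    then show "reval (\<lambda>_. False) Succ xs (Suc (xs ! 0))" by (simp add: reval.succ)
  qed
qed simp

lemma computable_fun_select:
  assumes "computable_fun (length ixs) f" "\<forall>i\<in>set ixs. i < n"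
  shows "computable_fun n (\<lambda>xs. f (map ((!) xs) ixs))"
proof -
  have "computable_fun n (\<lambda>xs. f (map (\<lambda>g. g xs) (map (\<lambda>i xs. xs ! i) ixs)))"
    by (rule computable_fun_comp[OF assms(1)]) (use assms(2) in \<open>auto intro: computable_fun_nth\<close>)
  then show ?thesis by (simp add: comp_def)
qed

lemma computable_fun_drop:
  "computable_fun n f \<Longrightarrow> computable_fun (m + n) (\<lambda>ys. f (drop m ys))"
proof -
  assume "computable_fun n f"
  then have "computable_fun (m + n) (\<lambda>ys. f (map ((!) ys) [m..<m + n]))"
    using computable_fun_select[where ixs="[m..<m + n]" and f=f and n="m + n"] by simp
  moreover have "map ((!) ys) [m..<m + n] = drop m ys" if "length ys = m + n" for ys :: "nat list"
    using that by (intro nth_equalityI) auto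
  ultimately show ?thesis by (elim computable_fun_cong) simp
qed

lemma computable_fun_Prec:
  assumes "computable_fun n f" "computable_fun (Suc (Suc n)) g"
  shows "computable_fun (Suc n) (\<lambda>ys. rec_nat (f (tl ys)) (\<lambda>i r. g (i # r # tl ys)) (hd ys))"
proof -
  obtain ef where ef: "\<forall>ys. length ys = n \<longrightarrow> reval (\<lambda>_. False) ef ys (f ys)"
    using assms(1) unfolding computable_fun_def by blast
  obtain eg where eg: "\<forall>ys. length ys = Suc (Suc n) \<longrightarrow> reval (\<lambda>_. False) eg ys (g ys)"
    using assms(2) unfolding computable_fun_def by blast
  have Prec: "reval (\<lambda>_. False) (Prec ef eg) (m # xs) (rec_nat (f xs) (\<lambda>i r. g (i # r # xs)) m)"
    if "length xs = n" for m xs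
  proof (induction m)
    case 0
    then show ?case using ef that by (simp add: reval.prec0)
  next
    case (Suc m)
    then show ?case using eg that by (auto intro: reval.precS)
  qed
  show ?thesis unfolding computable_fun_def
  proof (intro exI allI impI)
    fix ys :: "nat list" assume "length ys = Suc n"
    then obtain m xs where "ys = m # xs" "length xs = n" by (cases ys) auto
    then show "reval (\<lambda>_. False) (Prec ef eg) ys (rec_nat (f (tl ys)) (\<lambda>i r. g (i # r # tl ys)) (hd ys))"
      using Prec by simp
  qed
qed

lemma computable_fun_rec_nat:
  assumes c: "computable_fun n c" and b: "computable_fun n b" and s: "computable_fun (Suc (Suc n)) s"
  shows "computable_fun n (\<lambda>xs. rec_nat (b xs) (\<lambda>i r. s (i # r # xs)) (c xs))"
proof -
  have base: "computable_fun (Suc n) (\<lambda>ys. rec_nat (b (tl ys)) (\<lambda>i r. s (i # r # tl ys)) (hd ys))"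
    by (rule computable_fun_Prec[OF b s])
  have "computable_fun n (\<lambda>xs. (\<lambda>ys. rec_nat (b (tl ys)) (\<lambda>i r. s (i # r # tl ys)) (hd ys))
          (map (\<lambda>g. g xs) (c # map (\<lambda>i xs. xs ! i) [0..<n])))"
    by (rule computable_fun_comp[OF base]) (auto simp: c computable_fun_nth)
  moreover have "map ((!) xs) [0..<n] = xs" if "length xs = n" for xs :: "nat list"
    using map_nth[of xs] that by simp
  ultimately show ?thesis
    by (elim computable_fun_cong) (simp add: comp_def)
qed

lemma computable_fun_Least_zero:
  assumes f: "computable_fun (Suc n) f" and ex: "\<And>xs. length xs = n \<Longrightarrow> \<exists>m. f (m # xs) = 0"
  shows "computable_fun n (\<lambda>xs. LEAST m. f (m # xs) = 0)"
proof -
  obtain ef where ef: "\<forall>ys. length ys = Suc n \<longrightarrow> reval (\<lambda>_. False) ef ys (f ys)"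
    using f unfolding computable_fun_def by blast
  show ?thesis unfolding computable_fun_def
  proof (intro exI allI impI)
    fix xs :: "nat list" assume len: "length xs = n"
    let ?m = "LEAST m. f (m # xs) = 0"
    have z: "f (?m # xs) = 0" using ex[OF len] by (rule LeastI_ex)
    have "\<forall>m<?m. \<exists>v. v \<noteq> 0 \<and> reval (\<lambda>_. False) ef (m # xs) v"
      using not_less_Least[of _ "\<lambda>m. f (m # xs) = 0"] ef len by force
    then show "reval (\<lambda>_. False) (Mn ef) xs ?m"
      using ef len z by (metis reval.mn length_Cons)
  qed
qed

lemma computable_fun_hd [computable_intros]: "0 < n \<Longrightarrow> computable_fun n (\<lambda>ys. hd ys)"
  by (rule computable_fun_cong[OF computable_fun_nth[of 0 n]]) (auto simp: hd_conv_nth)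

lemma computable_fun_tl_nth [computable_intros]: "Suc i < n \<Longrightarrow> computable_fun n (\<lambda>ys. tl ys ! i)"
  by (rule computable_fun_cong[OF computable_fun_nth[of "Suc i" n]]) (auto simp: nth_tl)

lemma computable_fun_hd_tl [computable_intros]:
  assumes "Suc 0 < n" shows "computable_fun n (\<lambda>ys. hd (tl ys))"
proof (rule computable_fun_cong)
  show "computable_fun n (\<lambda>ys. tl ys ! 0)" using assms by (rule computable_fun_tl_nth)
  fix xs :: "nat list"
  assume "length xs = n"
  with assms show "tl xs ! 0 = hd (tl xs)" by (cases xs) (auto simp: hd_conv_nth)
qed

lemma computable_fun_tl_tl_nth [computable_intros]:
  "Suc (Suc i) < n \<Longrightarrow> computable_fun n (\<lambda>ys. tl (tl ys) ! i)"
  by (rule computable_fun_cong[OF computable_fun_nth[of "Suc (Suc i)" n]]) (auto simp: nth_tl)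

lemma rec_nat_add: "rec_nat a (\<lambda>i r. Suc r) b = a + (b::nat)"
  by (induction b) auto

lemma computable_fun_add [computable_intros]:
  "computable_fun n f \<Longrightarrow> computable_fun n g \<Longrightarrow> computable_fun n (\<lambda>xs. f xs + g xs)"
proof (rule computable_fun_lift2[where op="(+)"])
  show "computable_fun 2 (\<lambda>xs. rec_nat (xs ! 0) (\<lambda>i r. (\<lambda>ys. Suc (ys ! 1)) (i # r # xs)) (xs ! 1))"
    by (rule computable_fun_rec_nat) (intro computable_intros; simp)+
qed (simp add: rec_nat_add)

lemma rec_nat_mult: "rec_nat 0 (\<lambda>i r. r + a) b = a * (b::nat)"
  by (induction b) auto

lemma computable_fun_mult [computable_intros]:
  "computable_fun n f \<Longrightarrow> computable_fun n g \<Longrightarrow> computable_fun n (\<lambda>xs. f xs * g xs)"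
proof (rule computable_fun_lift2[where op="(*)"])
  show "computable_fun 2 (\<lambda>xs. rec_nat 0 (\<lambda>i r. (\<lambda>ys. ys ! 1 + ys ! 2) (i # r # xs)) (xs ! 1))"
    by (rule computable_fun_rec_nat) (intro computable_intros; simp)+
qed (simp add: rec_nat_mult)

lemma rec_nat_pred: "rec_nat 0 (\<lambda>i r. i) a = a - (1::nat)"
  by (induction a) auto

lemma computable_fun_pred: "computable_fun n f \<Longrightarrow> computable_fun n (\<lambda>xs. f xs - 1)"
proof (rule computable_fun_lift1[where op="\<lambda>x. x - 1"])
  show "computable_fun 1 (\<lambda>xs. rec_nat 0 (\<lambda>i r. (\<lambda>ys. ys ! 0) (i # r # xs)) (xs ! 0))"
    by (rule computable_fun_rec_nat) (intro computable_intros; simp)+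
qed (simp add: rec_nat_pred)

lemma rec_nat_diff: "rec_nat a (\<lambda>i r. r - Suc 0) b = a - (b::nat)"
  by (induction b) auto

lemma computable_fun_diff [computable_intros]:
  "computable_fun n f \<Longrightarrow> computable_fun n g \<Longrightarrow> computable_fun n (\<lambda>xs. f xs - g xs)"
proof (rule computable_fun_lift2[where op="(-)"])
  show "computable_fun 2 (\<lambda>xs. rec_nat (xs ! 0) (\<lambda>i r. (\<lambda>ys. ys ! 1 - 1) (i # r # xs)) (xs ! 1))"
    by (rule computable_fun_rec_nat) (intro computable_intros computable_fun_pred; simp)+
qed (simp add: rec_nat_diff)

lemma rec_nat_funpow: "rec_nat x (\<lambda>i r. h r) i = (h ^^ i) x"
  by (induction i) auto

lemma computable_fun_funpow:
  assumes h: "\<And>m f. computable_fun m f \<Longrightarrow> computable_fun m (\<lambda>xs. h (f xs))"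
    and "computable_fun n f" "computable_fun n g"
  shows "computable_fun n (\<lambda>xs. (h ^^ f xs) (g xs))"
proof -
  have "computable_fun n (\<lambda>xs. rec_nat (g xs) (\<lambda>i r. (\<lambda>ys. h (ys ! 1)) (i # r # xs)) (f xs))"
    using assms by (intro computable_fun_rec_nat h computable_fun_nth) simp_all
  then show ?thesis by (simp add: rec_nat_funpow)
qed

lemma computable_fun_if_zero:
  assumes c: "computable_fun n c" and "computable_fun n a" "computable_fun n b"
  shows "computable_fun n (\<lambda>xs. if c xs = 0 then a xs else b xs)"
proof -
  have "computable_fun n (\<lambda>xs. rec_nat (a xs) (\<lambda>i r. (\<lambda>ys. b (drop 2 ys)) (i # r # xs)) (c xs))"
    by (rule computable_fun_rec_nat[OF c]) (use assms computable_fun_drop[of n b 2] in simp_all)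
  moreover have "rec_nat x (\<lambda>i r. y) m = (if m = 0 then x else y)" for x y m :: nat
    by (cases m) simp_all
  ultimately show ?thesis by simp
qed

lemma computable_fun_if [computable_intros]:
  "computable_pred n P \<Longrightarrow> computable_fun n a \<Longrightarrow> computable_fun n b
    \<Longrightarrow> computable_fun n (\<lambda>xs. if P xs then a xs else b xs)"
  unfolding computable_pred_def
  by (drule (2) computable_fun_if_zero) (erule computable_fun_cong; simp)

lemma computable_pred_if_zero:
  "computable_fun n c \<Longrightarrow> computable_pred n (\<lambda>xs. c xs = 0)"
  unfolding computable_pred_def by (intro computable_fun_if_zero computable_fun_const)

lemma computable_pred_le [computable_intros]:
  "computable_fun n f \<Longrightarrow> computable_fun n g \<Longrightarrow> computable_pred n (\<lambda>xs. f xs \<le> g xs)"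
  using computable_pred_if_zero[of n "\<lambda>xs. f xs - g xs"] by (simp add: computable_fun_diff)

lemma computable_pred_not [computable_intros]:
  assumes "computable_pred n P" shows "computable_pred n (\<lambda>xs. \<not> P xs)"
proof -
  have "computable_pred n (\<lambda>xs. (if P xs then 1 else 0::nat) = 0)"
    using assms unfolding computable_pred_def[of n P] by (rule computable_pred_if_zero)
  then show ?thesis by (simp add: if_split_eq1)
qed

lemma computable_pred_conj [computable_intros]:
  "computable_pred n P \<Longrightarrow> computable_pred n Q \<Longrightarrow> computable_pred n (\<lambda>xs. P xs \<and> Q xs)"
  unfolding computable_pred_def
  by (drule (1) computable_fun_mult) (erule computable_fun_cong; simp)

lemma computable_pred_disj [computable_intros]:
  "computable_pred n P \<Longrightarrow> computable_pred n Q \<Longrightarrow> computable_pred n (\<lambda>xs. P xs \<or> Q xs)"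
  using computable_pred_not[OF computable_pred_conj[OF computable_pred_not computable_pred_not]]
  by simp

lemma computable_pred_imp [computable_intros]:
  "computable_pred n P \<Longrightarrow> computable_pred n Q \<Longrightarrow> computable_pred n (\<lambda>xs. P xs \<longrightarrow> Q xs)"
  using computable_pred_disj[OF computable_pred_not] by simp

lemma computable_pred_less [computable_intros]:
  "computable_fun n f \<Longrightarrow> computable_fun n g \<Longrightarrow> computable_pred n (\<lambda>xs. f xs < g xs)"
  using computable_pred_not[OF computable_pred_le[of n g f]] by (simp add: not_le)

lemma computable_pred_eq [computable_intros]:
  "computable_fun n f \<Longrightarrow> computable_fun n g \<Longrightarrow> computable_pred n (\<lambda>xs. f xs = g xs)"
  using computable_pred_conj[OF computable_pred_le[of n f g] computable_pred_le[of n g f]]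
  by (simp add: eq_iff)

lemma computable_fun_sum:
  assumes f: "computable_fun (Suc n) (\<lambda>ys. f (hd ys) (tl ys))" and c: "computable_fun n c"
  shows "computable_fun n (\<lambda>xs. \<Sum>i<c xs. f i xs)"
proof -
  have "map ((!) ys) (0 # [Suc (Suc 0)..<Suc (Suc n)]) = hd ys # drop 2 ys"
    if "length ys = Suc (Suc n)" for ys :: "nat list"
  proof -
    have "drop 2 ys = map ((!) ys) [Suc (Suc 0)..<length ys]"
      using drop_map[of 2 "(!) ys" "[0..<length ys]"] by (simp add: map_nth numeral_2_eq_2)
    moreover have "hd ys = ys ! 0" using that by (cases ys) auto
    ultimately show ?thesis using that by (simp only: list.map)
  qed
  moreover have "computable_fun (Suc (Suc n)) (\<lambda>ys. f (hd (map ((!) ys) (0 # [Suc (Suc 0)..<Suc (Suc n)])))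
      (tl (map ((!) ys) (0 # [Suc (Suc 0)..<Suc (Suc n)]))))"
    using f by (intro computable_fun_select[where f = "\<lambda>ys. f (hd ys) (tl ys)"]) (simp_all del: upt_Suc)
  ultimately have "computable_fun (Suc (Suc n)) (\<lambda>ys. f (hd ys) (drop 2 ys))"
    by (elim computable_fun_cong) (simp del: upt_Suc)
  then have "computable_fun n (\<lambda>xs. rec_nat 0 (\<lambda>i r. (\<lambda>ys. ys ! 1 + f (hd ys) (drop 2 ys)) (i # r # xs)) (c xs))"
    by (intro computable_fun_rec_nat c computable_intros) simp
  moreover have "rec_nat 0 (\<lambda>i r. r + f i xs) m = (\<Sum>i<m. f i xs)" for m xs
    by (induction m) auto
  ultimately show ?thesis by simp
qed

lemma computable_pred_bex:
  assumes "computable_pred (Suc n) (\<lambda>ys. P (hd ys) (tl ys))" and "computable_fun n c"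
  shows "computable_pred n (\<lambda>xs. \<exists>i<c xs. P i xs)"
proof -
  have "computable_fun n (\<lambda>xs. \<Sum>i<c xs. if P i xs then 1 else 0)"
    using computable_fun_sum[of n "\<lambda>i xs. if P i xs then 1 else 0"] assms
    unfolding computable_pred_def by blast
  then have "computable_pred n (\<lambda>xs. \<not> (\<Sum>i<c xs. if P i xs then 1 else 0) = (0::nat))"
    by (intro computable_pred_not computable_pred_if_zero)
  then show ?thesis by (rule computable_pred_cong) (auto simp: sum_eq_0_iff)
qed

lemma computable_pred_ball:
  assumes "computable_pred (Suc n) (\<lambda>ys. P (hd ys) (tl ys))" and "computable_fun n c"
  shows "computable_pred n (\<lambda>xs. \<forall>i<c xs. P i xs)"
  using computable_pred_not[OF computable_pred_bex[OF computable_pred_not[OF assms(1)] assms(2)]]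
  by simp

lemma computable_fun_Least:
  assumes P: "computable_pred (Suc n) (\<lambda>ys. P (hd ys) (tl ys))"
    and ex: "\<And>xs. length xs = n \<Longrightarrow> \<exists>m. P m xs"
  shows "computable_fun n (\<lambda>xs. LEAST m. P m xs)"
proof -
  have "computable_fun (Suc n) (\<lambda>ys. if P (hd ys) (tl ys) then 0 else 1)"
    by (intro computable_fun_if P computable_fun_const)
  then have "computable_fun n (\<lambda>xs. LEAST m. (if P (hd (m # xs)) (tl (m # xs)) then 0 else 1) = (0::nat))"
    by (rule computable_fun_Least_zero) (use ex in auto)
  moreover have "(\<lambda>m. (if P m xs then 0 else 1::nat) = 0) = (\<lambda>m. P m xs)" for xs
    by auto
  ultimately show ?thesis by simp
qed

section \<open>Coding pairs and lists\<close>

abbreviation cpair :: "nat \<Rightarrow> nat \<Rightarrow> nat" where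
  "cpair x y \<equiv> prod_encode (x, y)"

definition cfst :: "nat \<Rightarrow> nat" where "cfst z = fst (prod_decode z)"
definition csnd :: "nat \<Rightarrow> nat" where "csnd z = snd (prod_decode z)"

lemma cfst_cpair [simp]: "cfst (cpair x y) = x"
  by (simp add: cfst_def)

lemma csnd_cpair [simp]: "csnd (cpair x y) = y"
  by (simp add: csnd_def)

definition diagonal_index :: "nat \<Rightarrow> nat" where
  "diagonal_index z = (LEAST s. z < triangle (Suc s))"

lemma prod_decode_eq_diagonal_index:
  "prod_decode z = (z - triangle (diagonal_index z), diagonal_index z - (z - triangle (diagonal_index z)))"
proof -
  define s where "s = diagonal_index z"
  have "z < triangle (Suc z)" by (induction z) auto
  then have upper: "z < triangle (Suc s)"
    unfolding s_def diagonal_index_def by (rule LeastI)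
  have lower: "triangle s \<le> z"
  proof (cases s)
    case (Suc s')
    then have "\<not> z < triangle (Suc s')"
      using not_less_Least[of s' "\<lambda>s. z < triangle (Suc s)"] by (simp add: s_def diagonal_index_def)
    then show ?thesis using Suc by simp
  qed simp
  have "z = prod_encode (z - triangle s, s - (z - triangle s))"
    using upper lower by (simp add: prod_encode_def)
  then have "prod_decode z = (z - triangle s, s - (z - triangle s))"
    by (metis prod_encode_inverse)
  then show ?thesis by (simp add: s_def)
qed

lemma rec_nat_triangle: "rec_nat 0 (\<lambda>i r. Suc (r + i)) n = triangle n"
  by (induction n) auto

lemma computable_fun_triangle [computable_intros]:
  "computable_fun n f \<Longrightarrow> computable_fun n (\<lambda>xs. triangle (f xs))"
proof (rule computable_fun_lift1[where op=triangle])
  show "computable_fun 1 (\<lambda>xs. rec_nat 0 (\<lambda>i r. (\<lambda>ys. Suc (ys ! 1 + ys ! 0)) (i # r # xs)) (xs ! 0))"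
    by (rule computable_fun_rec_nat) (intro computable_intros; simp)+
qed (simp add: rec_nat_triangle)

lemma computable_fun_diagonal_index [computable_intros]:
  "computable_fun n f \<Longrightarrow> computable_fun n (\<lambda>xs. diagonal_index (f xs))"
proof (rule computable_fun_lift1[where op=diagonal_index])
  show "computable_fun 1 (\<lambda>xs. LEAST t. (\<lambda>t xs. xs ! 0 < triangle (Suc t)) t xs)"
  proof (rule computable_fun_Least)
    show "computable_pred (Suc 1) (\<lambda>ys. tl ys ! 0 < triangle (Suc (hd ys)))"
      by (intro computable_intros) simp_all
    fix xs :: "nat list"
    have "xs ! 0 < triangle (Suc (xs ! 0))" by (induction "xs ! 0") auto
    then show "\<exists>m. xs ! 0 < triangle (Suc m)" ..
  qed
qed (simp add: diagonal_index_def)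

lemma computable_fun_cpair [computable_intros]:
  "computable_fun n f \<Longrightarrow> computable_fun n g \<Longrightarrow> computable_fun n (\<lambda>xs. cpair (f xs) (g xs))"
  unfolding prod_encode_def by (simp add: computable_fun_add computable_fun_triangle)

lemma computable_fun_cfst [computable_intros]:
  "computable_fun n f \<Longrightarrow> computable_fun n (\<lambda>xs. cfst (f xs))"
  unfolding cfst_def prod_decode_eq_diagonal_index by (simp add: computable_intros)

lemma computable_fun_csnd [computable_intros]:
  "computable_fun n f \<Longrightarrow> computable_fun n (\<lambda>xs. csnd (f xs))"
  unfolding csnd_def prod_decode_eq_diagonal_index by (simp add: computable_intros)

abbreviation ccons :: "nat \<Rightarrow> nat \<Rightarrow> nat" where
  "ccons x l \<equiv> Suc (cpair x l)"

definition chd :: "nat \<Rightarrow> nat" where "chd l = cfst (l - 1)"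
definition ctl :: "nat \<Rightarrow> nat" where "ctl l = csnd (l - 1)"
definition cdrop :: "nat \<Rightarrow> nat \<Rightarrow> nat" where "cdrop i l = (ctl ^^ i) l"

lemma chd_ccons [simp]: "chd (ccons x l) = x"
  by (simp add: chd_def)

lemma ctl_ccons [simp]: "ctl (ccons x l) = l"
  by (simp add: ctl_def)

lemma ctl_0 [simp]: "ctl 0 = 0"
proof -
  have "prod_decode 0 = (0, 0)"
    using prod_encode_inverse[of "(0, 0)"] by (simp add: prod_encode_def)
  then show ?thesis by (simp add: ctl_def csnd_def)
qed

lemma ctl_list_encode: "ctl (list_encode xs) = list_encode (tl xs)"
  by (cases xs) simp_all

lemma cdrop_list_encode [simp]: "cdrop i (list_encode xs) = list_encode (drop i xs)"
proof (induction i arbitrary: xs)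
  case (Suc i)
  have "cdrop (Suc i) (list_encode xs) = cdrop i (ctl (list_encode xs))"
    by (simp add: cdrop_def funpow_Suc_right del: funpow.simps)
  then show ?case by (simp add: Suc.IH ctl_list_encode drop_Suc)
qed (simp add: cdrop_def)

lemma computable_fun_chd [computable_intros]:
  "computable_fun n f \<Longrightarrow> computable_fun n (\<lambda>xs. chd (f xs))"
  unfolding chd_def by (intro computable_intros)

lemma computable_fun_ctl [computable_intros]:
  "computable_fun n f \<Longrightarrow> computable_fun n (\<lambda>xs. ctl (f xs))"
  unfolding ctl_def by (intro computable_intros)

lemma computable_fun_cdrop [computable_intros]:
  "computable_fun n f \<Longrightarrow> computable_fun n g \<Longrightarrow> computable_fun n (\<lambda>xs. cdrop (f xs) (g xs))"
  unfolding cdrop_def by (rule computable_fun_funpow[OF computable_fun_ctl])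

lemma list_encode_eq_0_iff [simp]: "list_encode xs = 0 \<longleftrightarrow> xs = []"
  by (cases xs) simp_all

lemma chd_list_encode_drop: "i < length xs \<Longrightarrow> chd (list_encode (drop i xs)) = xs ! i"
  by (simp add: Cons_nth_drop_Suc[symmetric])

section \<open>A stack machine and the diagonal halting set\<close>

text \<open>A small-step stack machine for oracle-free evaluation (oracle queries are answered 0):
  a configuration is a mode together with a stack of frames recording the pending work of
  enclosing compositions (KC, K1, K2), primitive recursions (KP) and minimisations (KM).\<close>

datatype mode = Ev recf "nat list" | Evs "recf list" "nat list" | Rt nat | Rtl "nat list"

datatype frame =
  KC recf | K1 "recf list" "nat list" | K2 nat | KP recf nat "nat list" | KM recf nat "nat list"

fun step :: "mode \<times> frame list \<Rightarrow> mode \<times> frame list" where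
  "step (Ev Zero xs, st) = (Rt 0, st)"
| "step (Ev Succ (x#xs), st) = (Rt (Suc x), st)"
| "step (Ev (Proj i) xs, st) = (if i < length xs then (Rt (xs!i), st) else (Ev (Proj i) xs, st))"
| "step (Ev (Comp f gs) xs, st) = (Evs gs xs, KC f # st)"
| "step (Ev (Prec f g) (0#xs), st) = (Ev f xs, st)"
| "step (Ev (Prec f g) (Suc n#xs), st) = (Ev (Prec f g) (n#xs), KP g n xs # st)"
| "step (Ev (Mn f) xs, st) = (Ev f (0#xs), KM f 0 xs # st)"
| "step (Ev Orc (x#xs), st) = (Rt 0, st)"
| "step (Evs [] xs, st) = (Rtl [], st)"
| "step (Evs (g#gs) xs, st) = (Ev g xs, K1 gs xs # st)"
| "step (Rt v, K1 gs xs # st) = (Evs gs xs, K2 v # st)"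
| "step (Rt v, KP g n xs # st) = (Ev g (n # v # xs), st)"
| "step (Rt v, KM f m xs # st) = (if v = 0 then (Rt m, st) else (Ev f (Suc m # xs), KM f (Suc m) xs # st))"
| "step (Rtl vs, KC f # st) = (Ev f vs, st)"
| "step (Rtl vs, K2 v # st) = (Rtl (v # vs), st)"
| "step c = c"

definition reach :: "mode \<times> frame list \<Rightarrow> mode \<times> frame list \<Rightarrow> bool" where
  "reach c d \<longleftrightarrow> (\<exists>s. (step ^^ s) c = d)"

lemma reach_trans [trans]: "reach c d \<Longrightarrow> reach d e \<Longrightarrow> reach c e"
  unfolding reach_def by (metis funpow_add comp_apply)

lemma reach_single: "step c = d \<Longrightarrow> reach c d"
  unfolding reach_def by (intro exI[of _ 1]) simp

lemma reach_Evs: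
  "list_all2 (\<lambda>g y. \<forall>st. reach (Ev g xs, st) (Rt y, st)) gs ys \<Longrightarrow> reach (Evs gs xs, st) (Rtl ys, st)"
proof (induction gs ys arbitrary: st rule: list_all2_induct)
  case Nil
  show ?case by (rule reach_single) simp
next
  case (Cons g gs y ys)
  have "reach (Evs (g # gs) xs, st) (Ev g xs, K1 gs xs # st)" by (rule reach_single) simp
  also have "reach \<dots> (Rt y, K1 gs xs # st)" using Cons(1) by blast
  also have "reach \<dots> (Evs gs xs, K2 y # st)" by (rule reach_single) simp
  also have "reach \<dots> (Rtl ys, K2 y # st)" using Cons(3) by blast
  also have "reach \<dots> (Rtl (y # ys), st)" by (rule reach_single) simp
  finally show ?case .
qed

lemma reach_Mn_prefix:
  assumes "\<And>m st. m < n \<Longrightarrow> \<exists>v. v \<noteq> 0 \<and> reach (Ev f (m # xs), st) (Rt v, st)"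
  shows "m \<le> n \<Longrightarrow> reach (Ev (Mn f) xs, st) (Ev f (m # xs), KM f m xs # st)"
proof (induction m)
  case 0
  show ?case by (rule reach_single) simp
next
  case (Suc m)
  then obtain v where v: "v \<noteq> 0" "reach (Ev f (m # xs), KM f m xs # st) (Rt v, KM f m xs # st)"
    using assms by (metis Suc_le_lessD)
  from Suc have "reach (Ev (Mn f) xs, st) (Ev f (m # xs), KM f m xs # st)" by simp
  also have "reach \<dots> (Rt v, KM f m xs # st)" by (rule v(2))
  also have "reach \<dots> (Ev f (Suc m # xs), KM f (Suc m) xs # st)"
    by (rule reach_single) (simp add: v(1))
  finally show ?case .
qed

lemma reval_reach:
  "reval A e xs y \<Longrightarrow> A = (\<lambda>_. False) \<Longrightarrow> reach (Ev e xs, st) (Rt y, st)"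
proof (induction arbitrary: st rule: reval.induct)
  case (comp A xs gs ys f z)
  have "reach (Ev (Comp f gs) xs, st) (Evs gs xs, KC f # st)" by (rule reach_single) simp
  also have "reach \<dots> (Rtl ys, KC f # st)"
    using comp.IH comp.prems by (intro reach_Evs) (auto elim: list_all2_mono)
  also have "reach \<dots> (Ev f ys, st)" by (rule reach_single) simp
  also have "reach \<dots> (Rt z, st)" using comp by blast
  finally show ?case .
next
  case (prec0 A f xs y g)
  have "reach (Ev (Prec f g) (0 # xs), st) (Ev f xs, st)" by (rule reach_single) simp
  also have "reach \<dots> (Rt y, st)" using prec0 by blast
  finally show ?case .
next
  case (precS A f g n xs r y)
  have "reach (Ev (Prec f g) (Suc n # xs), st) (Ev (Prec f g) (n # xs), KP g n xs # st)"
    by (rule reach_single) simp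
  also have "reach \<dots> (Rt r, KP g n xs # st)" using precS by blast
  also have "reach \<dots> (Ev g (n # r # xs), st)" by (rule reach_single) simp
  also have "reach \<dots> (Rt y, st)" using precS by blast
  finally show ?case .
next
  case (mn A f n xs)
  have "reach (Ev (Mn f) xs, st) (Ev f (n # xs), KM f n xs # st)"
    using mn.IH(2) mn.prems by (intro reach_Mn_prefix[OF _ order_refl]) blast
  also have "reach \<dots> (Rt 0, KM f n xs # st)" using mn by blast
  also have "reach \<dots> (Rt n, st)" by (rule reach_single) simp
  finally show ?case .
qed (simp_all add: reach_single)

fun code_recf :: "recf \<Rightarrow> nat" where
  "code_recf Zero = cpair 0 0"
| "code_recf Succ = cpair 1 0"
| "code_recf (Proj i) = cpair 2 i"
| "code_recf (Comp f gs) = cpair 3 (cpair (code_recf f) (list_encode (map code_recf gs)))"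
| "code_recf (Prec f g) = cpair 4 (cpair (code_recf f) (code_recf g))"
| "code_recf (Mn f) = cpair 5 (code_recf f)"
| "code_recf Orc = cpair 6 0"

fun code_mode :: "mode \<Rightarrow> nat" where
  "code_mode (Ev e xs) = cpair 0 (cpair (code_recf e) (list_encode xs))"
| "code_mode (Evs gs xs) = cpair 1 (cpair (list_encode (map code_recf gs)) (list_encode xs))"
| "code_mode (Rt v) = cpair 2 v"
| "code_mode (Rtl vs) = cpair 3 (list_encode vs)"

fun code_frame :: "frame \<Rightarrow> nat" where
  "code_frame (KC f) = cpair 0 (code_recf f)"
| "code_frame (K1 gs xs) = cpair 1 (cpair (list_encode (map code_recf gs)) (list_encode xs))"
| "code_frame (K2 v) = cpair 2 v"
| "code_frame (KP g n xs) = cpair 3 (cpair (code_recf g) (cpair n (list_encode xs)))"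
| "code_frame (KM f m xs) = cpair 4 (cpair (code_recf f) (cpair m (list_encode xs)))"

fun code_config :: "mode \<times> frame list \<Rightarrow> nat" where
  "code_config (m, st) = cpair (code_mode m) (list_encode (map code_frame st))"

text \<open>step on codes, by case analysis on the tags; the whole code z is returned wherever step
  leaves the configuration unchanged.\<close>

definition step_code_Ev :: "nat \<Rightarrow> nat \<Rightarrow> nat \<Rightarrow> nat \<Rightarrow> nat" where
 "step_code_Ev z e xs st = (
  if cfst e = 0 then cpair (cpair 2 0) st
  else if cfst e = 1 then (if xs = 0 then z else cpair (cpair 2 (Suc (chd xs))) st)
  else if cfst e = 2 then (if cdrop (csnd e) xs = 0 then z else cpair (cpair 2 (chd (cdrop (csnd e) xs))) st)
  else if cfst e = 3 then cpair (cpair 1 (cpair (csnd (csnd e)) xs)) (ccons (cpair 0 (cfst (csnd e))) st)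
  else if cfst e = 4 then (if xs = 0 then z else if chd xs = 0 then cpair (cpair 0 (cpair (cfst (csnd e)) (ctl xs))) st
      else cpair (cpair 0 (cpair e (ccons (chd xs - 1) (ctl xs))))
              (ccons (cpair 3 (cpair (csnd (csnd e)) (cpair (chd xs - 1) (ctl xs)))) st))
  else if cfst e = 5 then cpair (cpair 0 (cpair (csnd e) (ccons 0 xs))) (ccons (cpair 4 (cpair (csnd e) (cpair 0 xs))) st)
  else if cfst e = 6 then (if xs = 0 then z else cpair (cpair 2 0) st)
  else z)"

definition step_code_Evs :: "nat \<Rightarrow> nat \<Rightarrow> nat \<Rightarrow> nat \<Rightarrow> nat" where
 "step_code_Evs z gs xs st = (if gs = 0 then cpair (cpair 3 0) st
    else cpair (cpair 0 (cpair (chd gs) xs)) (ccons (cpair 1 (cpair (ctl gs) xs)) st))"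

definition step_code_Rt :: "nat \<Rightarrow> nat \<Rightarrow> nat \<Rightarrow> nat" where
 "step_code_Rt z v st = (if st = 0 then z else
   if cfst (chd st) = 1 then cpair (cpair 1 (csnd (chd st))) (ccons (cpair 2 v) (ctl st))
   else if cfst (chd st) = 3 then
     cpair (cpair 0 (cpair (cfst (csnd (chd st))) (ccons (cfst (csnd (csnd (chd st)))) (ccons v (csnd (csnd (csnd (chd st)))))))) (ctl st)
   else if cfst (chd st) = 4 then
     (if v = 0 then cpair (cpair 2 (cfst (csnd (csnd (chd st))))) (ctl st)
      else cpair (cpair 0 (cpair (cfst (csnd (chd st))) (ccons (Suc (cfst (csnd (csnd (chd st))))) (csnd (csnd (csnd (chd st)))))))
              (ccons (cpair 4 (cpair (cfst (csnd (chd st))) (cpair (Suc (cfst (csnd (csnd (chd st))))) (csnd (csnd (csnd (chd st))))))) (ctl st)))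
   else z)"

definition step_code_Rtl :: "nat \<Rightarrow> nat \<Rightarrow> nat \<Rightarrow> nat" where
 "step_code_Rtl z vs st = (if st = 0 then z else
   if cfst (chd st) = 0 then cpair (cpair 0 (cpair (csnd (chd st)) vs)) (ctl st)
   else if cfst (chd st) = 2 then cpair (cpair 3 (ccons (csnd (chd st)) vs)) (ctl st)
   else z)"

definition step_code :: "nat \<Rightarrow> nat" where
 "step_code z = (
   if cfst (cfst z) = 0 then step_code_Ev z (cfst (csnd (cfst z))) (csnd (csnd (cfst z))) (csnd z)
   else if cfst (cfst z) = 1 then step_code_Evs z (cfst (csnd (cfst z))) (csnd (csnd (cfst z))) (csnd z)
   else if cfst (cfst z) = 2 then step_code_Rt z (csnd (cfst z)) (csnd z)
   else if cfst (cfst z) = 3 then step_code_Rtl z (csnd (cfst z)) (csnd z)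
   else z)"

lemma step_code_code_config: "step_code (code_config c) = code_config (step c)"
proof (induction c rule: step.induct)
  case (3 i xs st)
  then show ?case
    by (auto simp: step_code_def step_code_Ev_def chd_list_encode_drop)
next
  case (6 f g n xs st)
  then show ?case by (simp add: step_code_def step_code_Ev_def)
qed (simp_all add: step_code_def step_code_Ev_def step_code_Evs_def step_code_Rt_def step_code_Rtl_def)

lemma computable_fun_step_code [computable_intros]:
  "computable_fun n f \<Longrightarrow> computable_fun n (\<lambda>xs. step_code (f xs))"
proof (rule computable_fun_lift1[where op=step_code])
  show "computable_fun 1 (\<lambda>xs. step_code (xs ! 0))"
    unfolding step_code_def step_code_Ev_def step_code_Evs_def step_code_Rt_def step_code_Rtl_def
    by (intro computable_intros) simp_all
qed simp

definition init_code :: "nat \<Rightarrow> nat" where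
  "init_code k = cpair (cpair 0 (cpair k (list_encode [k]))) (list_encode [])"

definition halt_code :: "nat \<Rightarrow> nat" where
  "halt_code v = code_config (Rt v, [])"

text \<open>The program with code k, run on input k, halts with output 0 within s steps.\<close>

definition diag_halts :: "nat \<Rightarrow> nat \<Rightarrow> bool" where
  "diag_halts k s \<longleftrightarrow> (step_code ^^ s) (init_code k) = halt_code 0"

definition diag_set :: "nat set" where
  "diag_set = {k. \<exists>s. diag_halts k s}"

lemma computable_pred_diag_halts [computable_intros]:
  "computable_fun n f \<Longrightarrow> computable_fun n g \<Longrightarrow> computable_pred n (\<lambda>xs. diag_halts (f xs) (g xs))"
  unfolding diag_halts_def init_code_def halt_code_def list_encode.simps code_config.simps
  by (intro computable_intros computable_fun_funpow) simp_all

lemma funpow_step_code_code_config: "(step_code ^^ s) (code_config c) = code_config ((step ^^ s) c)"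
  by (induction s) (simp_all add: step_code_code_config)

lemma funpow_step_code_halt_code [simp]: "(step_code ^^ s) (halt_code v) = halt_code v"
proof -
  have "step_code (halt_code v) = halt_code v"
    unfolding halt_code_def step_code_code_config by simp
  then show ?thesis by (induction s) simp_all
qed

lemma halt_code_unique:
  assumes "(step_code ^^ s1) z = halt_code a" "(step_code ^^ s2) z = halt_code b"
  shows "a = b"
proof -
  have "halt_code a = (step_code ^^ (s2 + s1)) z" using assms(1) by (simp add: funpow_add)
  also have "\<dots> = halt_code b" using assms(2) by (simp add: funpow_add add.commute)
  finally show ?thesis by (simp add: halt_code_def)
qed

lemma diag_halts_mono: "diag_halts k s \<Longrightarrow> s \<le> s' \<Longrightarrow> diag_halts k s'"
  unfolding diag_halts_def by (metis funpow_add comp_apply funpow_step_code_halt_code le_add_diff_inverse2)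

text \<open>The diagonal argument: a decider d for the diagonal set, run on its own code, halts with
  output 0 exactly when its code is in the set, i.e.\ exactly when it should output 1.\<close>

lemma not_computable_diag_set: "\<not> computable_set diag_set"
proof
  assume "computable_set diag_set"
  then obtain d where d: "\<And>k. reval (\<lambda>_. False) d [k] (if k \<in> diag_set then 1 else 0)"
    unfolding computable_set_def by blast
  define k where "k = code_recf d"
  define y where "y = (if k \<in> diag_set then 1 else (0::nat))"
  have "reach (Ev d [k], []) (Rt y, [])"
    using reval_reach[OF d[of k]] by (simp add: y_def)
  then obtain s where "(step ^^ s) (Ev d [k], []) = (Rt y, [])"
    unfolding reach_def by blast
  then have run: "(step_code ^^ s) (init_code k) = halt_code y"
    using funpow_step_code_code_config[of s "(Ev d [k], [])"]
    by (simp add: init_code_def halt_code_def k_def)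
  show False
  proof (cases "k \<in> diag_set")
    case True
    then obtain s' where "(step_code ^^ s') (init_code k) = halt_code 0"
      by (auto simp: diag_set_def diag_halts_def)
    with run have "y = 0" by (rule halt_code_unique)
    with True show False by (simp add: y_def)
  next
    case False
    with run have "diag_halts k s" by (simp add: diag_halts_def y_def)
    with False show False by (auto simp: diag_set_def)
  qed
qed

section \<open>Trees given by a survival condition\<close>

lemma str_code_inj: "str_code s = str_code t \<Longrightarrow> s = t"
proof (induction s arbitrary: t)
  case Nil
  then show ?case by (cases t) (auto split: if_splits)
next
  case (Cons a s)
  then obtain b t' where t: "t = b # t'" by (cases t) (auto split: if_splits)
  with Cons.prems have "2 * str_code s + (if a then 2 else 1) = 2 * str_code t' + (if b then 2 else 1)"
    by simp
  then have "a = b" "str_code s = str_code t'" by (auto split: if_splits) presburger+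
  with Cons.IH t show ?case by simp
qed

lemma str_code_surj: "\<exists>s. str_code s = n"
proof (induction n rule: less_induct)
  case (less n)
  show ?case
  proof (cases n)
    case 0
    then show ?thesis by (intro exI[of _ "[]"]) simp
  next
    case (Suc m)
    then have n: "n = 2 * (m div 2) + (if odd m then 2 else 1)" by simp
    then obtain s where "str_code s = m div 2" using less by fastforce
    with n show ?thesis by (intro exI[of _ "odd m # s"]) simp
  qed
qed

definition code_tl :: "nat \<Rightarrow> nat" where "code_tl m = (LEAST q. m < 2 * q + 3)"

lemma code_tl_eq: "code_tl m = (m - 1) div 2"
  unfolding code_tl_def by (rule Least_equality) auto

lemma code_tl_str_code: "code_tl (str_code s) = str_code (tl s)"
  by (cases s) (simp_all add: code_tl_eq)

definition code_drop :: "nat \<Rightarrow> nat \<Rightarrow> nat" where "code_drop i n = (code_tl ^^ i) n"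

lemma code_drop_str_code: "code_drop i (str_code s) = str_code (drop i s)"
proof (induction i arbitrary: s)
  case (Suc i)
  have "code_drop (Suc i) (str_code s) = code_drop i (code_tl (str_code s))"
    by (simp add: code_drop_def funpow_Suc_right del: funpow.simps)
  then show ?case by (simp add: Suc.IH code_tl_str_code drop_Suc)
qed (simp add: code_drop_def)

definition code_nth :: "nat \<Rightarrow> nat \<Rightarrow> bool" where
  "code_nth n i \<longleftrightarrow> code_drop i n \<noteq> 0 \<and> 2 * code_tl (code_drop i n) + 2 = code_drop i n"

lemma code_nth_str_code: "i < length s \<Longrightarrow> code_nth (str_code s) i = s ! i"
  unfolding code_nth_def code_drop_str_code
  by (simp add: Cons_nth_drop_Suc[symmetric] code_tl_eq)

definition code_length :: "nat \<Rightarrow> nat" where "code_length n = (LEAST l. code_drop l n = 0)"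

lemma code_length_str_code: "code_length (str_code s) = length s"
  unfolding code_length_def code_drop_str_code
proof (rule Least_equality)
  fix l
  assume "str_code (drop l s) = 0"
  then have "drop l s = []" using str_code_inj[of "drop l s" "[]"] by simp
  then show "length s \<le> l" by simp
qed simp

lemma computable_fun_code_tl [computable_intros]:
  "computable_fun n f \<Longrightarrow> computable_fun n (\<lambda>xs. code_tl (f xs))"
proof (rule computable_fun_lift1[where op=code_tl])
  show "computable_fun 1 (\<lambda>xs. LEAST q. (\<lambda>q xs. xs ! 0 < 2 * q + 3) q xs)"
  proof (rule computable_fun_Least)
    show "computable_pred (Suc 1) (\<lambda>ys. tl ys ! 0 < 2 * hd ys + 3)"
      by (intro computable_intros) simp_all
    fix xs :: "nat list"
    show "\<exists>q. xs ! 0 < 2 * q + 3" by (intro exI[of _ "xs ! 0"]) simp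
  qed
qed (simp add: code_tl_def)

lemma computable_fun_code_drop [computable_intros]:
  "computable_fun n f \<Longrightarrow> computable_fun n g \<Longrightarrow> computable_fun n (\<lambda>xs. code_drop (f xs) (g xs))"
  unfolding code_drop_def by (rule computable_fun_funpow[OF computable_fun_code_tl])

lemma computable_pred_code_nth [computable_intros]:
  "computable_fun n f \<Longrightarrow> computable_fun n g \<Longrightarrow> computable_pred n (\<lambda>xs. code_nth (f xs) (g xs))"
  unfolding code_nth_def by (intro computable_intros)

lemma computable_fun_code_length [computable_intros]:
  "computable_fun n f \<Longrightarrow> computable_fun n (\<lambda>xs. code_length (f xs))"
proof (rule computable_fun_lift1[where op=code_length])
  show "computable_fun 1 (\<lambda>xs. LEAST l. (\<lambda>l xs. code_drop l (xs ! 0) = 0) l xs)"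
  proof (rule computable_fun_Least)
    show "computable_pred (Suc 1) (\<lambda>ys. code_drop (hd ys) (tl ys ! 0) = 0)"
      by (intro computable_intros) simp_all
    fix xs :: "nat list"
    obtain s where s: "str_code s = xs ! 0" using str_code_surj by blast
    have "length s \<le> str_code s" by (induction s) auto
    with s have "code_drop (xs ! 0) (xs ! 0) = 0" by (metis code_drop_str_code drop_all str_code.simps(1))
    then show "\<exists>l. code_drop l (xs ! 0) = 0" ..
  qed
qed (simp add: code_length_def)

text \<open>The tree whose paths have at most two 1s, where a path with 1s exactly at k and k + p + 1
  survives to stage t iff A k p t: the number of digits after the second 1 counts the stages.\<close>

definition tree_of :: "(nat \<Rightarrow> nat \<Rightarrow> nat \<Rightarrow> bool) \<Rightarrow> bool list set" where
  "tree_of A = {\<sigma>. card {i. i < length \<sigma> \<and> \<sigma> ! i} \<le> 2 \<and>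
     (\<forall>k p. Suc (k + p) < length \<sigma> \<longrightarrow> \<sigma> ! k \<longrightarrow> \<sigma> ! Suc (k + p) \<longrightarrow> A k p (length \<sigma> - (k + p + 2)))}"

definition code_in_tree_of :: "(nat \<Rightarrow> nat \<Rightarrow> nat \<Rightarrow> bool) \<Rightarrow> nat \<Rightarrow> bool" where
  "code_in_tree_of A n \<longleftrightarrow> (\<Sum>i<code_length n. if code_nth n i then 1 else 0) \<le> (2::nat) \<and>
     (\<forall>k<code_length n. \<forall>p<code_length n. Suc (k + p) < code_length n \<longrightarrow>
        code_nth n k \<longrightarrow> code_nth n (Suc (k + p)) \<longrightarrow> A k p (code_length n - (k + p + 2)))"

lemma card_eq_sum_if: "card {i. i < (L::nat) \<and> P i} = (\<Sum>i<L. if P i then 1 else (0::nat))"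
  using sum_of_bool_eq[of "{..<L}" P, where 'a = nat] by (simp add: of_bool_def Int_def)

lemma code_in_tree_of_str_code: "code_in_tree_of A (str_code s) \<longleftrightarrow> s \<in> tree_of A"
proof -
  have "(\<Sum>i<length s. if code_nth (str_code s) i then 1 else (0::nat))
      = (\<Sum>i<length s. if s ! i then 1 else 0)"
    by (rule sum.cong) (auto simp: code_nth_str_code)
  moreover have "(\<forall>k<length s. \<forall>p<length s. Suc (k + p) < length s \<longrightarrow> code_nth (str_code s) k \<longrightarrow>
      code_nth (str_code s) (Suc (k + p)) \<longrightarrow> A k p (length s - (k + p + 2))) \<longleftrightarrow>
    (\<forall>k p. Suc (k + p) < length s \<longrightarrow> s ! k \<longrightarrow> s ! Suc (k + p) \<longrightarrow> A k p (length s - (k + p + 2)))"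
    by (auto simp: code_nth_str_code)
  ultimately show ?thesis
    unfolding code_in_tree_of_def tree_of_def code_length_str_code by (simp add: card_eq_sum_if)
qed

lemma computable_tree_tree_of:
  assumes A: "computable_pred 3 (\<lambda>ys. A (ys ! 0) (ys ! 1) (ys ! 2))"
  shows "computable_tree (tree_of A)"
proof -
  have A_comp: "computable_pred n (\<lambda>xs. A (f xs) (g xs) (h xs))"
    if "computable_fun n f" "computable_fun n g" "computable_fun n h" for n f g h
    using computable_fun_comp3[OF A[unfolded computable_pred_def] that]
    unfolding computable_pred_def by simp
  have "computable_pred 1 (\<lambda>xs. code_in_tree_of A (xs ! 0))"
    unfolding code_in_tree_of_def
    by (intro computable_pred_conj computable_pred_le computable_fun_sum computable_pred_ball
        computable_intros A_comp) simp_all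
  moreover have "n \<in> str_code ` tree_of A \<longleftrightarrow> code_in_tree_of A n" for n
    using str_code_surj[of n] str_code_inj code_in_tree_of_str_code by blast
  ultimately show ?thesis
    unfolding computable_tree_def computable_set_iff_pred by simp
qed

lemma is_tree_tree_of:
  assumes mono: "\<And>k p t. A k p (Suc t) \<Longrightarrow> A k p t"
  shows "is_tree (tree_of A)"
  unfolding is_tree_def
proof (intro allI impI)
  fix s u
  assume su: "s @ u \<in> tree_of A"
  have "{i. i < length s \<and> s ! i} \<subseteq> {i. i < length (s @ u) \<and> (s @ u) ! i}"
    by (auto simp: nth_append)
  then have "card {i. i < length s \<and> s ! i} \<le> card {i. i < length (s @ u) \<and> (s @ u) ! i}"
    by (intro card_mono) simp_all
  moreover have "A k p (length s - (k + p + 2))"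
    if "Suc (k + p) < length s" "s ! k" "s ! Suc (k + p)" for k p
  proof -
    have "A k p (length (s @ u) - (k + p + 2))"
      using su that unfolding tree_of_def by (auto simp: nth_append)
    moreover have "A k p t'" if "t' \<le> t" "A k p t" for t t'
      using that by (induction t' rule: inc_induct) (auto intro: mono)
    ultimately show ?thesis by (metis diff_le_mono le_add1 length_append)
  qed
  ultimately show "s \<in> tree_of A" using su unfolding tree_of_def by auto
qed

lemma mem_paths_tree_of:
  "X \<in> paths (tree_of A) \<longleftrightarrow>
    (\<forall>n. card {i. i < n \<and> X i} \<le> 2) \<and> (\<forall>k p t. X k \<longrightarrow> X (Suc (k + p)) \<longrightarrow> A k p t)"
proof -
  have prefix: "map X [0..<n] \<in> tree_of A \<longleftrightarrow> card {i. i < n \<and> X i} \<le> 2 \<and>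
      (\<forall>k p. Suc (k + p) < n \<longrightarrow> X k \<longrightarrow> X (Suc (k + p)) \<longrightarrow> A k p (n - (k + p + 2)))" for n
  proof -
    have "{i. i < n \<and> map X [0..<n] ! i} = {i. i < n \<and> X i}" by auto
    then show ?thesis unfolding tree_of_def by auto
  qed
  show ?thesis
  proof
    assume "X \<in> paths (tree_of A)"
    then have all_prefixes: "\<And>n. map X [0..<n] \<in> tree_of A" unfolding paths_def by blast
    have "A k p t" if "X k" "X (Suc (k + p))" for k p t
    proof -
      have "\<forall>k' p'. Suc (k' + p') < k + p + 2 + t \<longrightarrow> X k' \<longrightarrow> X (Suc (k' + p'))
          \<longrightarrow> A k' p' (k + p + 2 + t - (k' + p' + 2))"
        using all_prefixes[of "k + p + 2 + t", unfolded prefix] by blast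
      moreover have "Suc (k + p) < k + p + 2 + t" by simp
      ultimately have "A k p (k + p + 2 + t - (k + p + 2))" using that by blast
      then show ?thesis by simp
    qed
    then show "(\<forall>n. card {i. i < n \<and> X i} \<le> 2) \<and> (\<forall>k p t. X k \<longrightarrow> X (Suc (k + p)) \<longrightarrow> A k p t)"
      using all_prefixes prefix by blast
  next
    assume "(\<forall>n. card {i. i < n \<and> X i} \<le> 2) \<and> (\<forall>k p t. X k \<longrightarrow> X (Suc (k + p)) \<longrightarrow> A k p t)"
    then show "X \<in> paths (tree_of A)" unfolding paths_def using prefix by auto
  qed
qed

section \<open>Eliminating a computable oracle\<close>

text \<open>Replace every oracle query by a call of the program Oe on the queried number and an extra
  argument k, which is appended as the last argument; a tracks the current arity, so that
  Proj a retrieves k.\<close>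

fun inline_oracle :: "recf \<Rightarrow> nat \<Rightarrow> recf \<Rightarrow> recf" where
  "inline_oracle Oe a Zero = Zero"
| "inline_oracle Oe a Succ = Succ"
| "inline_oracle Oe a (Proj i) = Proj i"
| "inline_oracle Oe a (Comp f gs) =
    Comp (inline_oracle Oe (length gs) f) (map (inline_oracle Oe a) gs @ [Proj a])"
| "inline_oracle Oe a (Prec f g) = Prec (inline_oracle Oe (a - 1) f) (inline_oracle Oe (Suc a) g)"
| "inline_oracle Oe a (Mn f) = Mn (inline_oracle Oe (Suc a) f)"
| "inline_oracle Oe a Orc = Comp Oe [Proj 0, Proj a]"

lemma reval_inline_oracle:
  "reval B e xs y \<Longrightarrow> (\<forall>x. reval (\<lambda>_. False) Oe [x, k] (if B x then 1 else 0))
    \<Longrightarrow> reval (\<lambda>_. False) (inline_oracle Oe (length xs) e) (xs @ [k]) y"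
proof (induction rule: reval.induct)
  case (zero A xs)
  then show ?case by (simp add: reval.zero)
next
  case (succ A x xs)
  then show ?case by (simp add: reval.succ)
next
  case (proj i xs A)
  have "reval (\<lambda>_. False) (Proj i) (xs @ [k]) ((xs @ [k]) ! i)" using proj by (intro reval.proj) simp
  then show ?case using proj by (simp add: nth_append)
next
  case (comp A xs gs ys f z)
  have l: "list_all2 (\<lambda>g y. reval (\<lambda>_. False) g (xs @ [k]) y) (map (inline_oracle Oe (length xs)) gs) ys"
    using comp.IH comp.prems by (auto simp: list_all2_map1 elim: list_all2_mono)
  have p: "list_all2 (\<lambda>g y. reval (\<lambda>_. False) g (xs @ [k]) y) [Proj (length xs)] [k]"
    using reval.proj[of "length xs" "xs @ [k]" "\<lambda>_. False"] by simp
  have "list_all2 (\<lambda>g y. reval (\<lambda>_. False) g (xs @ [k]) y)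
      (map (inline_oracle Oe (length xs)) gs @ [Proj (length xs)]) (ys @ [k])"
    by (rule list_all2_appendI[OF l p])
  moreover have "length ys = length gs" using comp.IH by (simp add: list_all2_lengthD)
  moreover have "reval (\<lambda>_. False) (inline_oracle Oe (length ys) f) (ys @ [k]) z" using comp by blast
  ultimately show ?case by (auto intro: reval.comp)
next
  case (prec0 A f xs y g)
  then show ?case by (auto intro: reval.prec0)
next
  case (precS A f g n xs r y)
  then show ?case by (auto intro: reval.precS)
next
  case (mn A f n xs)
  have h0: "reval (\<lambda>_. False) (inline_oracle Oe (Suc (length xs)) f) (n # (xs @ [k])) 0" using mn by simp
  have h1: "\<forall>m<n. \<exists>v. v \<noteq> 0 \<and> reval (\<lambda>_. False) (inline_oracle Oe (Suc (length xs)) f) (m # (xs @ [k])) v"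
    using mn.IH(2) mn.prems by fastforce
  show ?case using reval.mn[OF h0 h1] by simp
next
  case (orc A x xs)
  have "list_all2 (\<lambda>g y. reval (\<lambda>_. False) g ((x # xs) @ [k]) y) [Proj 0, Proj (length (x # xs))] [x, k]"
    using reval.proj[of 0 "(x # xs) @ [k]" "\<lambda>_. False"] reval.proj[of "length (x#xs)" "(x # xs) @ [k]" "\<lambda>_. False"]
    by (simp add: nth_append)
  moreover have "reval (\<lambda>_. False) Oe [x, k] (if A x then 1 else 0)" using orc by blast
  ultimately show ?case by (simp only: inline_oracle.simps) (rule reval.comp)
qed
lemma computable_fun_oracle_elim:
  assumes bits: "computable_pred 2 (\<lambda>ys. B (ys ! 1) (ys ! 0))"
    and e_comp: "\<And>x k. reval (B k) e [x] (f x k)"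
  shows "computable_fun 2 (\<lambda>ys. f (ys ! 0) (ys ! 1))"
proof -
  obtain Oe where Oe: "\<And>ys. length ys = 2 \<Longrightarrow> reval (\<lambda>_. False) Oe ys (if B (ys ! 1) (ys ! 0) then 1 else 0)"
    using bits unfolding computable_pred_def computable_fun_def by blast
  have "reval (\<lambda>_. False) (inline_oracle Oe 1 e) [x, k] (f x k)" for x k
    using reval_inline_oracle[OF e_comp, where Oe = Oe and k = k] Oe[of "[_, k]"] by simp
  moreover have "ys = [ys ! 0, ys ! 1]" if "length ys = 2" for ys :: "nat list"
    using that by (auto simp: numeral_2_eq_2 length_Suc_conv)
  ultimately show ?thesis unfolding computable_fun_def by metis
qed

section \<open>The lexicographic order on the path sets\<close>

definition zero_seq :: "nat \<Rightarrow> bool" where "zero_seq = (\<lambda>_. False)"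
definition unit_seq :: "nat \<Rightarrow> nat \<Rightarrow> bool" where "unit_seq k = (\<lambda>n. n = k)"
definition pair_seq :: "nat \<Rightarrow> nat \<Rightarrow> nat \<Rightarrow> bool" where "pair_seq k p = (\<lambda>n. n = k \<or> n = Suc (k + p))"

definition seq_family :: "(nat \<Rightarrow> nat) \<Rightarrow> (nat \<Rightarrow> bool) set" where
  "seq_family \<tau> = insert zero_seq (range unit_seq \<union> range (\<lambda>k. pair_seq k (\<tau> k)))"

lemma finite_ones_card_le:
  fixes X :: "nat \<Rightarrow> bool"
  assumes "\<forall>n. card {i. i < n \<and> X i} \<le> c"
  shows "finite {i. X i}" "card {i. X i} \<le> c"
proof -
  have bounded: "card F \<le> c" if F: "F \<subseteq> {i. X i}" "finite F" for F
  proof (cases "F = {}")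
    case False
    with F have "F \<subseteq> {i. i < Suc (Max F) \<and> X i}" by (auto simp: le_imp_less_Suc)
    then have "card F \<le> card {i. i < Suc (Max F) \<and> X i}" by (rule card_mono[rotated]) simp
    then show ?thesis using assms[rule_format, of "Suc (Max F)"] by linarith
  qed simp
  show fin: "finite {i. X i}"
  proof (rule ccontr)
    assume "infinite {i. X i}"
    then obtain F where "F \<subseteq> {i. X i}" "finite F" "card F = Suc c"
      using infinite_arbitrarily_large by blast
    then show False using bounded[of F] by simp
  qed
  show "card {i. X i} \<le> c" using bounded[OF order_refl fin] .
qed

lemma seq_shape:
  assumes "\<forall>n. card {i. i < n \<and> X i} \<le> 2"
  shows "X = zero_seq \<or> (\<exists>k. X = unit_seq k) \<or> (\<exists>k p. X = pair_seq k p)"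
proof -
  let ?O = "{i. X i}"
  have finO: "finite ?O" and cO: "card ?O \<le> 2"
    using finite_ones_card_le[OF assms] by simp_all
  then consider "card ?O = 0" | "card ?O = 1" | "card ?O = 2" by linarith
  then show ?thesis
  proof cases
    case 1
    then have "?O = {}" using finO by simp
    then have "X = zero_seq" unfolding zero_seq_def by auto
    then show ?thesis by blast
  next
    case 2
    then obtain k where k: "?O = {k}" by (rule card_1_singletonE)
    have "X = unit_seq k" unfolding unit_seq_def
    proof
      fix n have "n \<in> ?O \<longleftrightarrow> n \<in> {k}" using k by simp
      then show "X n = (n = k)" by simp
    qed
    then show ?thesis by blast
  next
    case 3
    then obtain a b where ab: "?O = {a, b}" "a \<noteq> b" by (meson card_2_iff)
    have "\<exists>k p. ?O = {k, Suc (k + p)}"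
    proof (cases "a < b")
      case True
      then have "Suc (a + (b - a - 1)) = b" by simp
      then show ?thesis using ab(1) by metis
    next
      case False
      then have "b < a" using ab by simp
      then have "Suc (b + (a - b - 1)) = a" by simp
      then show ?thesis using ab(1) by (metis insert_commute)
    qed
    then obtain k p where kp: "?O = {k, Suc (k + p)}" by blast
    have "X = pair_seq k p" unfolding pair_seq_def
    proof
      fix n have "n \<in> ?O \<longleftrightarrow> n \<in> {k, Suc (k + p)}" using kp by simp
      then show "X n = (n = k \<or> n = Suc (k + p))" by simp
    qed
    then show ?thesis by blast
  qed
qed

lemma seq_family_cases [consumes 1, case_names zero_seq unit_seq pair_seq]:
  assumes "X \<in> seq_family \<tau>"
  obtains "X = zero_seq" | k where "X = unit_seq k" | k where "X = pair_seq k (\<tau> k)"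
  using assms unfolding seq_family_def by blast

lemma pair_seq_ones: "pair_seq k p a \<Longrightarrow> pair_seq k p (Suc (a + q)) \<Longrightarrow> a = k \<and> q = p"
  unfolding pair_seq_def by (elim disjE) linarith+

lemma paths_tree_of:
  assumes tau: "\<And>k p. (\<forall>t. A k p t) \<longleftrightarrow> p = \<tau> k"
  shows "paths (tree_of A) = seq_family \<tau>"
proof (rule set_eqI)
  fix X
  show "X \<in> paths (tree_of A) \<longleftrightarrow> X \<in> seq_family \<tau>"
  proof
    assume "X \<in> paths (tree_of A)"
    then have card: "\<forall>n. card {i. i < n \<and> X i} \<le> 2"
      and A: "\<forall>k p t. X k \<longrightarrow> X (Suc (k + p)) \<longrightarrow> A k p t"
      unfolding mem_paths_tree_of by blast+
    from seq_shape[OF card] show "X \<in> seq_family \<tau>"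
    proof (elim disjE exE)
      fix k p
      assume X: "X = pair_seq k p"
      with A have "\<forall>t. A k p t" unfolding pair_seq_def by auto
      with X tau show ?thesis unfolding seq_family_def by auto
    qed (auto simp: seq_family_def)
  next
    assume "X \<in> seq_family \<tau>"
    then obtain a b where ones: "\<And>n. {i. i < n \<and> X i} \<subseteq> {a, b}"
      and A: "\<forall>k p t. X k \<longrightarrow> X (Suc (k + p)) \<longrightarrow> A k p t"
    proof (cases rule: seq_family_cases)
      case (pair_seq k)
      have "A k' p t" if "X k'" "X (Suc (k' + p))" for k' p t
        using pair_seq_ones[of k "\<tau> k" k' p] that pair_seq tau[of k p] by simp
      then show ?thesis using pair_seq by (intro that[of k "Suc (k + \<tau> k)"]) (auto simp: pair_seq_def)
    qed (auto simp: zero_seq_def unit_seq_def intro: that)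
    have "card {i. i < n \<and> X i} \<le> 2" for n
      using card_mono[OF _ ones[of n]] by (simp add: card_insert_if split: if_splits)
    with A show "X \<in> paths (tree_of A)" unfolding mem_paths_tree_of by blast
  qed
qed

lemma lex_less_at:
  assumes "\<forall>m<n. X m = Y m" "X n \<noteq> Y n"
  shows "lex_less X Y \<longleftrightarrow> \<not> X n \<and> Y n"
proof -
  have "(LEAST m. X m \<noteq> Y m) = n"
    by (rule Least_equality) (use assms in \<open>auto simp: not_less[symmetric]\<close>)
  moreover have "X \<noteq> Y" using assms by auto
  ultimately show ?thesis unfolding lex_less_def by (simp add: Let_def)
qed

lemma lex_less_irrefl: "\<not> lex_less X X" unfolding lex_less_def by simp

lemma lex_less_pair_pair: "lex_less (pair_seq k p) (pair_seq j q) \<longleftrightarrow> j < k \<or> (j = k \<and> q < p)"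
proof -
  consider "j < k" | "k < j" | "j = k" "q < p" | "j = k" "p < q" | "j = k" "p = q"
    by linarith
  then show ?thesis
  proof cases
    case 1
    then show ?thesis by (subst lex_less_at[of j]) (auto simp: pair_seq_def)
  next
    case 2
    then show ?thesis by (subst lex_less_at[of k]) (auto simp: pair_seq_def)
  next
    case 3
    then show ?thesis by (subst lex_less_at[of "Suc (k + q)"]) (auto simp: pair_seq_def)
  next
    case 4
    then show ?thesis by (subst lex_less_at[of "Suc (k + p)"]) (auto simp: pair_seq_def)
  qed (simp add: lex_less_irrefl)
qed

lemma lex_less_unit_unit: "lex_less (unit_seq k) (unit_seq j) \<longleftrightarrow> j < k"
proof -
  consider "j < k" | "k < j" | "j = k" by linarith
  then show ?thesis
  proof cases
    case 1
    then show ?thesis by (subst lex_less_at[of j]) (auto simp: unit_seq_def)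
  next
    case 2
    then show ?thesis by (subst lex_less_at[of k]) (auto simp: unit_seq_def)
  qed (simp add: lex_less_irrefl)
qed

lemma lex_less_pair_unit: "lex_less (pair_seq k p) (unit_seq j) \<longleftrightarrow> j < k"
proof -
  consider "j < k" | "k < j" | "j = k" by linarith
  then show ?thesis
  proof cases
    case 1
    then show ?thesis by (subst lex_less_at[of j]) (auto simp: unit_seq_def pair_seq_def)
  next
    case 2
    then show ?thesis by (subst lex_less_at[of k]) (auto simp: unit_seq_def pair_seq_def)
  next
    case 3
    then show ?thesis
      by (subst lex_less_at[of "Suc (k + p)"]) (auto simp: unit_seq_def pair_seq_def)
  qed
qed

lemma lex_less_unit_pair: "lex_less (unit_seq k) (pair_seq j q) \<longleftrightarrow> j \<le> k"
proof -
  consider "j < k" | "k < j" | "j = k" by linarith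
  then show ?thesis
  proof cases
    case 1
    then show ?thesis by (subst lex_less_at[of j]) (auto simp: unit_seq_def pair_seq_def)
  next
    case 2
    then show ?thesis by (subst lex_less_at[of k]) (auto simp: unit_seq_def pair_seq_def)
  next
    case 3
    then show ?thesis
      by (subst lex_less_at[of "Suc (k + q)"]) (auto simp: unit_seq_def pair_seq_def)
  qed
qed

lemma not_lex_less_zero: "\<not> lex_less X zero_seq"
  unfolding lex_less_def zero_seq_def by (simp add: Let_def)

lemma lex_less_zero_unit: "lex_less zero_seq (unit_seq j)"
  by (subst lex_less_at[of j]) (auto simp: zero_seq_def unit_seq_def)

lemma lex_less_zero_pair: "lex_less zero_seq (pair_seq j q)"
  by (subst lex_less_at[of j]) (auto simp: zero_seq_def pair_seq_def)

lemmas lex_less_seq_simps = lex_less_pair_pair lex_less_unit_unit lex_less_pair_unit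
  lex_less_unit_pair not_lex_less_zero lex_less_zero_unit lex_less_zero_pair lex_less_irrefl

lemma Least_pair_seq: "(LEAST n. pair_seq k p n) = k"
  by (rule Least_equality) (auto simp: pair_seq_def)

lemma seq_distinct [simp]:
  "zero_seq \<noteq> unit_seq k" "unit_seq k \<noteq> zero_seq"
  "zero_seq \<noteq> pair_seq k p" "pair_seq k p \<noteq> zero_seq"
  "unit_seq j \<noteq> pair_seq k p" "pair_seq k p \<noteq> unit_seq j"
  "unit_seq j = unit_seq k \<longleftrightarrow> j = k" "pair_seq k p = pair_seq k' p' \<longleftrightarrow> k = k' \<and> p = p'"
proof -
  show "zero_seq \<noteq> unit_seq k" "unit_seq k \<noteq> zero_seq" "zero_seq \<noteq> pair_seq k p" "pair_seq k p \<noteq> zero_seq"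
    by (auto simp: zero_seq_def unit_seq_def pair_seq_def fun_eq_iff)
  show "unit_seq j \<noteq> pair_seq k p"
  proof
    assume "unit_seq j = pair_seq k p"
    then have "unit_seq j k" "unit_seq j (Suc (k + p))" by (auto simp: pair_seq_def)
    then show False by (simp add: unit_seq_def)
  qed
  then show "pair_seq k p \<noteq> unit_seq j" by (rule not_sym)
  show "unit_seq j = unit_seq k \<longleftrightarrow> j = k"
    by (auto simp: unit_seq_def fun_eq_iff)
  show "pair_seq k p = pair_seq k' p' \<longleftrightarrow> k = k' \<and> p = p'"
  proof
    assume eq: "pair_seq k p = pair_seq k' p'"
    have "k = k'" using arg_cong[OF eq, of "\<lambda>X. LEAST n. X n"] by (simp add: Least_pair_seq)
    moreover have "pair_seq k' p' (Suc (k + p))" unfolding eq[symmetric] by (simp add: pair_seq_def)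
    ultimately show "k = k' \<and> p = p'" by (simp add: pair_seq_def)
  qed simp
qed

definition family_iso :: "(nat \<Rightarrow> nat) \<Rightarrow> (nat \<Rightarrow> nat) \<Rightarrow> (nat \<Rightarrow> bool) \<Rightarrow> (nat \<Rightarrow> bool)" where
  "family_iso \<tau>1 \<tau>2 X = (if \<exists>k. X = pair_seq k (\<tau>1 k) then pair_seq (LEAST n. X n) (\<tau>2 (LEAST n. X n)) else X)"

lemma family_iso_pair_seq[simp]: "family_iso \<tau>1 \<tau>2 (pair_seq k (\<tau>1 k)) = pair_seq k (\<tau>2 k)"
  unfolding family_iso_def Least_pair_seq by auto

lemma family_iso_unit_seq[simp]: "family_iso \<tau>1 \<tau>2 (unit_seq k) = unit_seq k"
  unfolding family_iso_def by simp

lemma family_iso_zero_seq[simp]: "family_iso \<tau>1 \<tau>2 zero_seq = zero_seq"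
  unfolding family_iso_def by simp

lemma zero_seq_in_family [simp]: "zero_seq \<in> seq_family \<tau>"
  and unit_seq_in_family [simp]: "unit_seq k \<in> seq_family \<tau>"
  and pair_seq_in_family [simp]: "pair_seq k (\<tau> k) \<in> seq_family \<tau>"
  unfolding seq_family_def by auto

lemma order_iso_on_family_iso: "order_iso_on (seq_family \<tau>1) (seq_family \<tau>2) (family_iso \<tau>1 \<tau>2)"
  unfolding order_iso_on_def
proof (intro conjI ballI)
  show "bij_betw (family_iso \<tau>1 \<tau>2) (seq_family \<tau>1) (seq_family \<tau>2)"
  proof (rule bij_betw_imageI)
    show "inj_on (family_iso \<tau>1 \<tau>2) (seq_family \<tau>1)"
    proof (rule inj_onI)
      fix X Y assume "X \<in> seq_family \<tau>1" "Y \<in> seq_family \<tau>1" "family_iso \<tau>1 \<tau>2 X = family_iso \<tau>1 \<tau>2 Y"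
      then show "X = Y" by (elim seq_family_cases) simp_all
    qed
    show "family_iso \<tau>1 \<tau>2 ` seq_family \<tau>1 = seq_family \<tau>2"
    proof
      show "family_iso \<tau>1 \<tau>2 ` seq_family \<tau>1 \<subseteq> seq_family \<tau>2"
        by (auto elim: seq_family_cases)
      show "seq_family \<tau>2 \<subseteq> family_iso \<tau>1 \<tau>2 ` seq_family \<tau>1"
      proof
        fix Y assume "Y \<in> seq_family \<tau>2"
        then show "Y \<in> family_iso \<tau>1 \<tau>2 ` seq_family \<tau>1"
        proof (cases rule: seq_family_cases)
          case zero_seq
          then show ?thesis using family_iso_zero_seq zero_seq_in_family by (metis image_eqI)
        next
          case (unit_seq k)
          then show ?thesis using family_iso_unit_seq unit_seq_in_family by (metis image_eqI)
        next
          case (pair_seq k)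
          then show ?thesis using family_iso_pair_seq pair_seq_in_family by (metis image_eqI)
        qed
      qed
    qed
  qed
next
  fix X Y assume "X \<in> seq_family \<tau>1" "Y \<in> seq_family \<tau>1"
  then show "lex_less X Y \<longleftrightarrow> lex_less (family_iso \<tau>1 \<tau>2 X) (family_iso \<tau>1 \<tau>2 Y)"
    by (elim seq_family_cases) (auto simp: lex_less_seq_simps)
qed

definition upper_set :: "(nat \<Rightarrow> bool) set \<Rightarrow> (nat \<Rightarrow> bool) \<Rightarrow> (nat \<Rightarrow> bool) set" where
  "upper_set A X = {Y \<in> A. lex_less X Y}"

lemma bij_betw_upper_set:
  assumes "order_iso_on A B g" "X \<in> A"
  shows "bij_betw g (upper_set A X) (upper_set B (g X))"
proof -
  have bij: "bij_betw g A B" and ord: "\<And>Y. Y \<in> A \<Longrightarrow> lex_less X Y \<longleftrightarrow> lex_less (g X) (g Y)"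
    using assms unfolding order_iso_on_def by auto
  have "g ` upper_set A X = upper_set B (g X)"
  proof
    show "g ` upper_set A X \<subseteq> upper_set B (g X)"
      using bij ord unfolding upper_set_def bij_betw_def by auto
    show "upper_set B (g X) \<subseteq> g ` upper_set A X"
    proof
      fix Y'
      assume "Y' \<in> upper_set B (g X)"
      moreover from this obtain Y where "Y \<in> A" "Y' = g Y"
        using bij unfolding upper_set_def bij_betw_def by auto
      ultimately show "Y' \<in> g ` upper_set A X" using ord unfolding upper_set_def by auto
    qed
  qed
  moreover have "inj_on g (upper_set A X)"
    using bij unfolding bij_betw_def upper_set_def by (auto intro: inj_on_subset)
  ultimately show ?thesis unfolding bij_betw_def by simp
qed

lemma upper_set_pair_seq:
  "upper_set (seq_family \<tau>) (pair_seq k (\<tau> k)) = unit_seq ` {..<k} \<union> (\<lambda>j. pair_seq j (\<tau> j)) ` {..<k}"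
  unfolding upper_set_def seq_family_def by (auto simp: lex_less_seq_simps)

lemma upper_set_unit_seq:
  "upper_set (seq_family \<tau>) (unit_seq k) = unit_seq ` {..<k} \<union> (\<lambda>j. pair_seq j (\<tau> j)) ` {..<Suc k}"
  unfolding upper_set_def seq_family_def by (auto simp: lex_less_seq_simps less_Suc_eq_le)

lemma infinite_upper_set_zero_seq: "infinite (upper_set (seq_family \<tau>) zero_seq)"
proof
  assume "finite (upper_set (seq_family \<tau>) zero_seq)"
  moreover have "range unit_seq \<subseteq> upper_set (seq_family \<tau>) zero_seq"
    unfolding upper_set_def by (auto simp: lex_less_seq_simps)
  ultimately have "finite (range unit_seq)" by (rule finite_subset[rotated])
  moreover have "inj unit_seq" by (rule injI) simp
  ultimately show False using finite_imageD by blast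
qed

lemma card_initial_segments:
  "card (unit_seq ` {..<a} \<union> (\<lambda>j. pair_seq j (\<tau> j)) ` {..<b}) = a + b"
proof -
  have "card (unit_seq ` {..<a}) = a" by (subst card_image) (auto intro: inj_onI)
  moreover have "card ((\<lambda>j. pair_seq j (\<tau> j)) ` {..<b}) = b" by (subst card_image) (auto intro: inj_onI)
  ultimately show ?thesis by (subst card_Un_disjoint) auto
qed

text \<open>Rigidity: above pair_seq k (\<tau> k) there are exactly 2k elements of the family, above
  unit_seq k there are 2k + 1 and above zero_seq infinitely many.\<close>

lemma order_iso_on_pair_seq:
  assumes g: "order_iso_on (seq_family \<tau>1) (seq_family \<tau>2) g"
  shows "g (pair_seq k (\<tau>1 k)) = pair_seq k (\<tau>2 k)"
proof -
  let ?X = "pair_seq k (\<tau>1 k)"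
  have "bij_betw g (upper_set (seq_family \<tau>1) ?X) (upper_set (seq_family \<tau>2) (g ?X))"
    using g by (intro bij_betw_upper_set) simp_all
  moreover have "finite (upper_set (seq_family \<tau>1) ?X)" "card (upper_set (seq_family \<tau>1) ?X) = k + k"
    unfolding upper_set_pair_seq by (simp_all add: card_initial_segments)
  ultimately have fin: "finite (upper_set (seq_family \<tau>2) (g ?X))"
    and card: "card (upper_set (seq_family \<tau>2) (g ?X)) = k + k"
    by (auto simp: bij_betw_finite bij_betw_same_card[symmetric])
  have "g ?X \<in> seq_family \<tau>2" using g unfolding order_iso_on_def bij_betw_def by auto
  then show ?thesis
  proof (cases rule: seq_family_cases)
    case zero_seq
    then show ?thesis using fin infinite_upper_set_zero_seq by simp
  next
    case (unit_seq j)
    then show ?thesis using card by (simp add: upper_set_unit_seq card_initial_segments) presburger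
  next
    case (pair_seq j)
    moreover from this have "j = k" using card by (simp add: upper_set_pair_seq card_initial_segments)
    ultimately show ?thesis by simp
  qed
qed

lemma computable_set_of_computable_family_iso:
  assumes \<tau>1: "computable_fun 1 (\<lambda>xs. \<tau>1 (xs ! 0))"
    and iso: "order_iso_on (seq_family \<tau>1) (seq_family \<tau>2) g"
    and "computable_map_on (seq_family \<tau>1) g"
  shows "computable_set {k. \<tau>2 k = 0}"
proof -
  obtain e where e: "\<And>X n. X \<in> seq_family \<tau>1 \<Longrightarrow> reval X e [n] (if g X n then 1 else 0)"
    using assms(3) unfolding computable_map_on_def by blast
  have "computable_fun 2 (\<lambda>ys. \<tau>1 (ys ! 1))"
    using computable_fun_comp1[OF \<tau>1, of 2 "\<lambda>ys. ys ! 1"] by (simp add: computable_fun_nth)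
  then have "computable_pred 2 (\<lambda>ys. pair_seq (ys ! 1) (\<tau>1 (ys ! 1)) (ys ! 0))"
    unfolding pair_seq_def by (intro computable_intros) simp_all
  moreover have "reval (pair_seq k (\<tau>1 k)) e [x] (if pair_seq k (\<tau>2 k) x then 1 else 0)" for x k
    using e[of "pair_seq k (\<tau>1 k)" x] order_iso_on_pair_seq[OF iso] by simp
  ultimately have "computable_fun 2 (\<lambda>ys. if pair_seq (ys ! 1) (\<tau>2 (ys ! 1)) (ys ! 0) then 1 else 0)"
    by (rule computable_fun_oracle_elim)
  from computable_fun_comp2[OF this, of 1 "\<lambda>xs. Suc (xs ! 0)" "\<lambda>xs. xs ! 0"]
  have "computable_fun 1 (\<lambda>xs. if pair_seq (xs ! 0) (\<tau>2 (xs ! 0)) (Suc (xs ! 0)) then 1 else 0)"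
    by (simp add: computable_fun_nth computable_fun_Suc)
  moreover have "pair_seq k p (Suc k) \<longleftrightarrow> p = 0" for k p
    by (auto simp: pair_seq_def)
  ultimately show ?thesis unfolding computable_set_iff_pred computable_pred_def by simp
qed

lemma computable_set_Compl: "computable_set (- S) \<Longrightarrow> computable_set S"
  unfolding computable_set_iff_pred using computable_pred_not by fastforce

text \<open>p = 0 records that k has not entered the diagonal set by stage t; p = s + 1 records that
  it entered exactly at stage s.\<close>

definition halting_cond :: "nat \<Rightarrow> nat \<Rightarrow> nat \<Rightarrow> bool" where
  "halting_cond k p t \<longleftrightarrow>
    (p = 0 \<and> \<not> diag_halts k t) \<or> (0 < p \<and> diag_halts k (p - 1) \<and> (p - 1 = 0 \<or> \<not> diag_halts k (p - 2)))"

definition halting_stage :: "nat \<Rightarrow> nat" where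
  "halting_stage k = (if k \<in> diag_set then Suc (LEAST s. diag_halts k s) else 0)"

lemma halting_cond_Suc: "halting_cond k p (Suc t) \<Longrightarrow> halting_cond k p t"
  unfolding halting_cond_def using diag_halts_mono[of k t "Suc t"] by auto

lemma computable_pred_halting_cond: "computable_pred 3 (\<lambda>ys. halting_cond (ys ! 0) (ys ! 1) (ys ! 2))"
  unfolding halting_cond_def by (intro computable_intros) simp_all

lemma halting_cond_iff: "(\<forall>t. halting_cond k p t) \<longleftrightarrow> p = halting_stage k"
proof (cases "k \<in> diag_set")
  case False
  then show ?thesis by (auto simp: halting_cond_def halting_stage_def diag_set_def)
next
  case True
  define s where "s = (LEAST s. diag_halts k s)"
  have s: "diag_halts k s" using True unfolding s_def diag_set_def by (auto intro: LeastI)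
  have s_min: "\<not> diag_halts k s'" if "s' < s" for s'
    using that unfolding s_def by (rule not_less_Least)
  have "(\<forall>t. halting_cond k p t) \<longleftrightarrow> p = Suc s"
  proof
    assume "\<forall>t. halting_cond k p t"
    then have p: "0 < p" "diag_halts k (p - 1)" and first: "p - 1 = 0 \<or> \<not> diag_halts k (p - 2)"
      using s by (auto simp: halting_cond_def)
    have "s \<le> p - 1" using p(2) s_min not_le by blast
    moreover have "p - 1 = 0 \<or> \<not> s \<le> p - 2" using first s diag_halts_mono by blast
    ultimately show "p = Suc s" using p(1) by linarith
  next
    assume "p = Suc s"
    then show "\<forall>t. halting_cond k p t" using s s_min[of "s - 1"] by (auto simp: halting_cond_def)
  qed
  with True show ?thesis by (simp add: halting_stage_def s_def)
qed

theorem lemma3p4: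
  shows "\<exists>P Q. is_tree P \<and> is_tree Q \<and> computable_tree P \<and> computable_tree Q \<and>
     (\<exists>h. order_iso_on (paths P) (paths Q) h) \<and>
     \<not> (\<exists>h. order_iso_on (paths P) (paths Q) h \<and> computable_map_on (paths P) h)"
proof (intro exI conjI)
  let ?P = "tree_of (\<lambda>k p t. p = 0)" and ?Q = "tree_of halting_cond"
  have paths_P: "paths ?P = seq_family (\<lambda>_. 0)" by (rule paths_tree_of) simp
  have paths_Q: "paths ?Q = seq_family halting_stage" by (rule paths_tree_of[OF halting_cond_iff])
  show "is_tree ?P" by (rule is_tree_tree_of) simp
  show "is_tree ?Q" by (rule is_tree_tree_of[OF halting_cond_Suc])
  show "computable_tree ?P" by (rule computable_tree_tree_of) (intro computable_intros; simp)
  show "computable_tree ?Q" by (rule computable_tree_tree_of[OF computable_pred_halting_cond])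
  show "order_iso_on (paths ?P) (paths ?Q) (family_iso (\<lambda>_. 0) halting_stage)"
    unfolding paths_P paths_Q by (rule order_iso_on_family_iso)
  show "\<not> (\<exists>h. order_iso_on (paths ?P) (paths ?Q) h \<and> computable_map_on (paths ?P) h)"
  proof
    assume "\<exists>h. order_iso_on (paths ?P) (paths ?Q) h \<and> computable_map_on (paths ?P) h"
    then obtain h where "order_iso_on (seq_family (\<lambda>_. 0)) (seq_family halting_stage) h"
      and "computable_map_on (seq_family (\<lambda>_. 0)) h"
      unfolding paths_P paths_Q by blast
    then have "computable_set {k. halting_stage k = 0}"
      by (intro computable_set_of_computable_family_iso[OF computable_fun_const])
    moreover have "{k. halting_stage k = 0} = - diag_set" by (auto simp: halting_stage_def)
    ultimately show False using computable_set_Compl not_computable_diag_set by simp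
  qed
qed
end
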